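(* Let $k\ge 2$ be an integer and $\epsilon>0$. Suppose $h=h(X)$ satisfies $1\le h\le (\log X)^{k\log k-k+1-\epsilon}$. Then for every $\eta>0$, for all sufficiently large $X$, the number of integers $x\in[X,2X]$ with $$\sum_{x<n\le x+h}d_k(n)>\eta\, h(\log x)^{k-1}$$ is at most $\eta X$; that is, $\sum_{x<n\le x+h}d_k(n)=o(h(\log x)^{k-1})$ for all but $o(X)$ integers $x\in[X,2X]$.
   Context: For an integer $k\ge1$, $d_k(n)=\#\{(n_1,\dots,n_k)\in\mathbb N^k: n_1n_2\cdots n_k=n\}$ is the $k$-fold divisor function. *)

theory Defs
  imports Complex_Main
begin

definition divisor_k :: "nat \<Rightarrow> nat \<Rightarrow> nat" where
  "divisor_k k n = card {xs :: nat list. length xs = k \<and> (\<forall>a\<in>set xs. 0 < a) \<and> prod_list xs = n}"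

end

theory Submission
  imports Defs "HOL-Computational_Algebra.Primes" "HOL-Library.FuncSet" "HOL-Real_Asymp.Real_Asymp"
begin

text \<open>
  Let \<open>c(j)\<close> be the number of weak compositions of \<open>j\<close> into \<open>k\<close> parts and
  \<open>A(n) = \<Prod>\<^sub>p c(v\<^sub>p(n))\<close>, so that \<open>d\<^sub>k(n) \<le> A(n)\<close>. Fix a threshold \<open>T\<close> and an
  exponent \<open>0 < s < 1\<close> (Rankin's trick). If some \<open>n\<close> in \<open>(x, x + h]\<close> has \<open>A(n) \<ge> T\<close>,
  then \<open>(A(n) / T)^s \<ge> 1\<close>; otherwise \<open>d\<^sub>k(n) \<le> A(n)^s T^(1 - s)\<close> throughout the
  interval. Summing over \<open>x\<close>, the number of exceptional \<open>x \<in> [X, 2X]\<close> is at most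
  \<open>(h T^(-s) + T^(1 - s) / (\<eta> (log X)^(k - 1))) \<Sum>\<^sub>n\<^sub>\<le>\<^sub>3\<^sub>X A(n)^s\<close>.
  The multiplicative function \<open>A^s\<close> equals \<open>k^s\<close> at the primes, so the Hall--Tenenbaum
  inequality and an Euler product bound (which need only Chebyshev- and Mertens-type
  estimates) give \<open>\<Sum>\<^sub>n\<^sub>\<le>\<^sub>N A(n)^s = O(N (log N)^(k^s - 1))\<close>. With \<open>T = (log X)^\<tau>\<close>,
  \<open>\<tau> = k log k - \<epsilon>/2\<close> and \<open>s = 1 - \<delta>\<close> for a small \<open>\<delta>\<close>, both terms become negative
  powers of \<open>log X\<close>, because \<open>k^(1 - \<delta>) = k - \<delta> k log k + O(\<delta>\<^sup>2)\<close>.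
\<close>

section \<open>Weak compositions and the divisor function\<close>

definition weak_compositions :: "nat \<Rightarrow> nat \<Rightarrow> nat" where
  "weak_compositions k j = card {ys::nat list. length ys = k \<and> sum_list ys = j}"

lemma finite_weak_compositions: "finite {ys::nat list. length ys = k \<and> sum_list ys = j}"
proof (rule finite_subset[OF _ finite_lists_length_eq[of "{0..j}" k]])
  show "{ys::nat list. length ys = k \<and> sum_list ys = j} \<subseteq> {xs. set xs \<subseteq> {0..j} \<and> length xs = k}"
    using member_le_sum_list by fastforce
qed simp

lemma weak_compositions_Suc: "weak_compositions (Suc k) j = (\<Sum>a\<le>j. weak_compositions k (j - a))"
proof -
  have eq: "{ys::nat list. length ys = Suc k \<and> sum_list ys = j} =
     (\<Union>a\<in>{..j}. (\<lambda>ys. a # ys) ` {ys. length ys = k \<and> sum_list ys = j - a})"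
  proof (intro equalityI subsetI)
    fix ys assume "ys \<in> {ys::nat list. length ys = Suc k \<and> sum_list ys = j}"
    then obtain a zs where "ys = a # zs" "length zs = k" "a + sum_list zs = j"
      by (cases ys) auto
    thus "ys \<in> (\<Union>a\<in>{..j}. (\<lambda>ys. a # ys) ` {ys. length ys = k \<and> sum_list ys = j - a})"
      by force
  qed auto
  have "weak_compositions (Suc k) j =
      (\<Sum>a\<le>j. card ((\<lambda>ys. a # ys) ` {ys. length ys = k \<and> sum_list ys = j - a}))"
    unfolding weak_compositions_def eq
    by (rule card_UN_disjoint) (auto intro: finite_weak_compositions)
  also have "\<dots> = (\<Sum>a\<le>j. weak_compositions k (j - a))"
    unfolding weak_compositions_def by (intro sum.cong refl card_image) (auto simp: inj_on_def)
  finally show ?thesis .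
qed

lemma weak_compositions_0_left: "weak_compositions 0 j = (if j = 0 then 1 else 0)"
proof -
  have "{ys::nat list. length ys = 0 \<and> sum_list ys = j} = (if j = 0 then {[]} else {})" by auto
  thus ?thesis by (simp add: weak_compositions_def)
qed

lemma weak_compositions_0_right: "weak_compositions k 0 = 1"
  by (induction k) (auto simp: weak_compositions_Suc weak_compositions_0_left)

lemma weak_compositions_1_right: "weak_compositions k 1 = k"
proof (induction k)
  case 0 thus ?case by (simp add: weak_compositions_0_left)
next
  case (Suc k)
  have "{..1::nat} = {0,1}" by auto
  thus ?case using Suc by (simp add: weak_compositions_Suc weak_compositions_0_right)
qed

lemma weak_compositions_pos: "k \<ge> 1 \<Longrightarrow> weak_compositions k j \<ge> 1"
proof (cases k)
  case (Suc k')
  have "weak_compositions k' (j - j) \<le> (\<Sum>a\<le>j. weak_compositions k' (j - a))"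
    by (rule member_le_sum) auto
  thus ?thesis using Suc by (simp add: weak_compositions_Suc weak_compositions_0_right)
qed auto

lemma weak_compositions_le_power: "weak_compositions k j \<le> (j + 1) ^ k"
proof (induction k arbitrary: j)
  case 0 thus ?case by (simp add: weak_compositions_0_left)
next
  case (Suc k)
  have "weak_compositions (Suc k) j = (\<Sum>a\<le>j. weak_compositions k (j - a))"
    by (rule weak_compositions_Suc)
  also have "\<dots> \<le> (\<Sum>a\<le>j. (j + 1) ^ k)"
  proof (intro sum_mono)
    fix a assume "a \<in> {..j}"
    have "weak_compositions k (j - a) \<le> (j - a + 1) ^ k" by (rule Suc)
    also have "\<dots> \<le> (j + 1) ^ k" by (intro power_mono) auto
    finally show "weak_compositions k (j - a) \<le> (j + 1) ^ k" .
  qed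
  also have "\<dots> = (j + 1) ^ Suc k" by simp
  finally show ?case .
qed

lemma multiplicity_prod_list:
  fixes p :: nat
  assumes "prime p" "\<forall>a\<in>set xs. 0 < a"
  shows "sum_list (map (multiplicity p) xs) = multiplicity p (prod_list xs)"
  using assms(2)
proof (induction xs)
  case Nil thus ?case by simp
next
  case (Cons x xs)
  have "prod_list xs \<noteq> 0" using Cons.prems by (auto simp: prod_list_zero_iff)
  moreover have "x \<noteq> 0" using Cons.prems by auto
  ultimately show ?case using Cons assms(1)
    by (simp add: prime_elem_multiplicity_mult_distrib)
qed

text \<open>
  A factorisation \<open>n = n\<^sub>1 \<cdots> n\<^sub>k\<close> is determined by the exponent vectors
  \<open>(v\<^sub>p(n\<^sub>1), \<dots>, v\<^sub>p(n\<^sub>k))\<close>, which are weak compositions of \<open>v\<^sub>p(n)\<close>.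
\<close>
lemma divisor_k_le_prod_weak_compositions:
  fixes n :: nat
  assumes "n > 0"
  shows "divisor_k k n \<le> (\<Prod>p\<in>prime_factors n. weak_compositions k (multiplicity p n))"
proof -
  define S where "S = {xs :: nat list. length xs = k \<and> (\<forall>a\<in>set xs. 0 < a) \<and> prod_list xs = n}"
  define T where "T = (\<Pi>\<^sub>E p \<in> prime_factors n.
    {ys::nat list. length ys = k \<and> sum_list ys = multiplicity p n})"
  define f where "f = (\<lambda>xs. restrict (\<lambda>p. map (multiplicity p) xs) (prime_factors n))"
  have sub: "f ` S \<subseteq> T"
  proof
    fix y assume "y \<in> f ` S"
    then obtain xs where xs: "xs \<in> S" "y = f xs" by auto
    show "y \<in> T" unfolding T_def xs(2) f_def
      using xs(1) multiplicity_prod_list[of _ xs] by (auto simp: S_def)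
  qed
  have inj: "inj_on f S"
  proof (rule inj_onI)
    fix xs ys assume xs: "xs \<in> S" and ys: "ys \<in> S" and eq: "f xs = f ys"
    show "xs = ys"
    proof (rule nth_equalityI)
      show "length xs = length ys" using xs ys by (simp add: S_def)
      fix i assume i: "i < length xs"
      have ix: "xs ! i \<in> set xs" using i by simp
      have iy: "ys ! i \<in> set ys" using i xs ys by (simp add: S_def)
      have px: "xs ! i > 0" "xs ! i dvd n" using xs ix prod_list_dvd[OF ix] by (auto simp: S_def)
      have py: "ys ! i > 0" "ys ! i dvd n" using ys iy prod_list_dvd[OF iy] by (auto simp: S_def)
      show "xs ! i = ys ! i"
      proof (rule multiplicity_eq_nat[OF px(1) py(1)])
        fix p :: nat assume p: "prime p"
        show "multiplicity p (xs ! i) = multiplicity p (ys ! i)"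
        proof (cases "p \<in> prime_factors n")
          case True
          hence "map (multiplicity p) xs = map (multiplicity p) ys"
            using fun_cong[OF eq, of p] by (simp add: f_def)
          thus ?thesis using i \<open>length xs = length ys\<close> by (metis nth_map)
        next
          case False
          hence "\<not> p dvd n" using p assms by (auto simp: in_prime_factors_iff)
          hence "\<not> p dvd xs ! i" "\<not> p dvd ys ! i" using px py dvd_trans by blast+
          thus ?thesis by (simp add: not_dvd_imp_multiplicity_0)
        qed
      qed
    qed
  qed
  have "finite T" unfolding T_def by (intro finite_PiE) (auto intro: finite_weak_compositions)
  hence "card S \<le> card T" using card_inj_on_le[OF inj sub] by simp
  also have "card T = (\<Prod>p\<in>prime_factors n. weak_compositions k (multiplicity p n))"
    unfolding T_def weak_compositions_def by (simp add: card_PiE)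
  finally show ?thesis by (simp add: divisor_k_def S_def)
qed

section \<open>Functions determined by prime exponents\<close>

definition primes_le :: "nat \<Rightarrow> nat set" where "primes_le n = {p. prime p \<and> p \<le> n}"

lemma finite_primes_le [simp]: "finite (primes_le n)"
  by (simp add: primes_le_def)

lemma primes_le_le_1: "n \<le> 1 \<Longrightarrow> primes_le n = {}"
  by (auto simp: primes_le_def dest: prime_gt_1_nat)

lemma ln_nonneg_primes_le: "p \<in> primes_le n \<Longrightarrow> ln (real p) \<ge> 0"
  by (auto simp: primes_le_def dest: prime_gt_0_nat)

definition mult_by_exponents :: "(nat \<Rightarrow> real) \<Rightarrow> nat \<Rightarrow> real" where
  "mult_by_exponents w n = (\<Prod>p\<in>prime_factors n. w (multiplicity p n))"

lemma mult_by_exponents_nonneg: "(\<And>j. w j \<ge> 0) \<Longrightarrow> mult_by_exponents w n \<ge> 0"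
  unfolding mult_by_exponents_def by (intro prod_nonneg) auto

lemma mult_by_exponents_prime_power_mult:
  fixes p m j :: nat
  assumes p: "prime p" and nd: "\<not> p dvd m" and m: "m > 0" and j: "j \<ge> 1"
  shows "mult_by_exponents w (p ^ j * m) = w j * mult_by_exponents w m"
proof -
  have "prime_factors (p ^ j) = {p}" using p j by (simp add: prime_factorization_prime_power)
  hence pf: "prime_factors (p ^ j * m) = insert p (prime_factors m)"
    using p m j by (simp add: prime_factors_product)
  have pn: "p \<notin> prime_factors m" using nd by (auto simp: in_prime_factors_iff)
  have mp: "multiplicity p (p ^ j * m) = j"
    using p m nd by (simp add: prime_elem_multiplicity_mult_distrib not_dvd_imp_multiplicity_0)
  have mq: "multiplicity q (p ^ j * m) = multiplicity q m" if "q \<in> prime_factors m" for q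
  proof -
    have q: "prime q" "q \<noteq> p" using that pn by (auto simp: in_prime_factors_iff)
    have "multiplicity q (p ^ j) = 0"
      using q p by (simp add: prime_elem_multiplicity_power_distrib prime_multiplicity_other)
    thus ?thesis using q p m by (simp add: prime_elem_multiplicity_mult_distrib)
  qed
  show ?thesis unfolding mult_by_exponents_def pf using pn by (simp add: mp mq)
qed

lemma mult_by_exponents_eq_prod:
  fixes m :: nat
  assumes "finite P" "prime_factors m \<subseteq> P" "m > 0" "w 0 = 1" "\<forall>p\<in>P. prime p"
  shows "mult_by_exponents w m = (\<Prod>p\<in>P. w (multiplicity p m))"
  unfolding mult_by_exponents_def
  by (rule prod.mono_neutral_left[OF assms(1) assms(2)])
     (use assms(3-5) in \<open>auto simp: prime_factors_multiplicity\<close>)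

lemma prod_prime_powers_multiplicity:
  fixes m :: nat
  assumes "finite P" "prime_factors m \<subseteq> P" "m > 0" "\<forall>p\<in>P. prime p"
  shows "(\<Prod>p\<in>P. p ^ multiplicity p m) = m"
proof -
  have "(\<Prod>p\<in>P. p ^ multiplicity p m) = (\<Prod>p\<in>prime_factors m. p ^ multiplicity p m)"
    by (rule prod.mono_neutral_right[OF assms(1) assms(2)])
       (use assms(3,4) in \<open>auto simp: prime_factors_multiplicity\<close>)
  also have "\<dots> = m" using prime_factorization_nat[OF assms(3)] by simp
  finally show ?thesis .
qed

lemma multiplicity_le_self:
  fixes p m :: nat
  assumes "prime p" "m > 0"
  shows "multiplicity p m \<le> m"
proof -
  have "multiplicity p m < 2 ^ multiplicity p m" by (rule less_exp)
  also have "\<dots> \<le> p ^ multiplicity p m" using assms by (intro power_mono) (auto simp: prime_ge_2_nat)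
  also have "\<dots> \<le> m" using assms by (intro dvd_imp_le multiplicity_dvd) auto
  finally show ?thesis by simp
qed

text \<open>Expanding the Euler product: every \<open>m \<le> N\<close> is a product of prime powers \<open>p^j\<close> with \<open>p, j \<le> N\<close>.\<close>
lemma sum_mult_by_exponents_div_le_Euler_product:
  fixes N :: nat and w :: "nat \<Rightarrow> real"
  assumes w0: "w 0 = 1" and w_nonneg: "\<And>j. w j \<ge> 0"
  shows "(\<Sum>m=1..N. mult_by_exponents w m / m) \<le> (\<Prod>p\<in>primes_le N. \<Sum>j\<le>N. w j / real p ^ j)"
proof -
  define P where "P = primes_le N"
  have P: "finite P" "\<forall>p\<in>P. prime p" by (simp_all add: P_def primes_le_def)
  define G where "G = (\<lambda>e. \<Prod>p\<in>P. w (e p) / real p ^ (e p))"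
  have "(\<Sum>m=1..N. mult_by_exponents w m / m) \<le> (\<Sum>e\<in>PiE P (\<lambda>_. {..N}). G e)"
  proof (rule sum_le_included[where i = "\<lambda>e. \<Prod>p\<in>P. p ^ e p"])
    show "finite (PiE P (\<lambda>_. {..N}))" using P by (intro finite_PiE) auto
    show "\<forall>e\<in>PiE P (\<lambda>_. {..N}). 0 \<le> G e"
      unfolding G_def by (intro ballI prod_nonneg divide_nonneg_nonneg w_nonneg) auto
    show "\<forall>m\<in>{1..N}. \<exists>e\<in>PiE P (\<lambda>_. {..N}). (\<Prod>p\<in>P. p ^ e p) = m
        \<and> mult_by_exponents w m / m \<le> G e"
    proof
      fix m assume m: "m \<in> {1..N}"
      define e where "e = restrict (\<lambda>p. multiplicity p m) P"
      have pf: "prime_factors m \<subseteq> P"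
      proof
        fix p assume "p \<in> prime_factors m"
        hence p: "prime p" "p dvd m" by (auto simp: in_prime_factors_iff)
        hence "p \<le> m" using m by (intro dvd_imp_le) auto
        thus "p \<in> P" using m p by (simp add: P_def primes_le_def)
      qed
      have "multiplicity p m \<le> N" if "p \<in> P" for p
        using multiplicity_le_self[of p m] that m P(2) by auto
      hence "e \<in> PiE P (\<lambda>_. {..N})" by (simp add: e_def restrict_PiE_iff)
      moreover have "(\<Prod>p\<in>P. p ^ e p) = m"
        using prod_prime_powers_multiplicity[OF P(1) pf _ P(2)] m by (simp add: e_def)
      moreover have "mult_by_exponents w m / m = G e"
        using mult_by_exponents_eq_prod[where w = w, OF P(1) pf _ w0 P(2)] m
          arg_cong[OF prod_prime_powers_multiplicity[OF P(1) pf _ P(2)], of real]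
        by (simp add: G_def e_def prod_dividef)
      ultimately show "\<exists>e\<in>PiE P (\<lambda>_. {..N}). (\<Prod>p\<in>P. p ^ e p) = m
          \<and> mult_by_exponents w m / m \<le> G e" by auto
    qed
  qed simp
  also have "\<dots> = (\<Prod>p\<in>P. \<Sum>j\<le>N. w j / real p ^ j)"
    unfolding G_def by (rule prod_sum_PiE[symmetric]) (auto simp: P)
  finally show ?thesis by (simp add: P_def)
qed

section \<open>Chebyshev and Mertens bounds\<close>

lemma prod_primes_dvd:
  fixes S :: "nat set"
  assumes "finite S" "\<forall>p\<in>S. prime p" "\<forall>p\<in>S. p dvd n"
  shows "\<Prod>S dvd n"
  using assms
proof (induction S rule: finite_induct)
  case empty thus ?case by simp
next
  case (insert p S)
  have "\<not> p dvd \<Prod>S"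
  proof
    assume "p dvd \<Prod>S"
    then obtain q where "q \<in> S" "p dvd q" using insert by (auto simp: prime_dvd_prod_iff)
    hence "p = q" using insert by (auto simp: primes_dvd_imp_eq)
    thus False using \<open>q \<in> S\<close> insert by auto
  qed
  hence "coprime p (\<Prod>S)" using insert by (auto intro: prime_imp_coprime)
  thus ?case using insert by (auto intro: divides_mult)
qed

lemma prod_primes_between_dvd_central_binomial:
  "\<Prod>{p. prime p \<and> m < p \<and> p \<le> 2 * m} dvd (2 * m) choose m"
proof (rule prod_primes_dvd)
  show "\<forall>p\<in>{p. prime p \<and> m < p \<and> p \<le> 2 * m}. p dvd (2 * m choose m)"
  proof
    fix p assume p: "p \<in> {p. prime p \<and> m < p \<and> p \<le> 2 * m}"
    have "fact m * fact (2 * m - m) * (2 * m choose m) = (fact (2 * m) :: nat)"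
      by (rule binomial_fact_lemma) auto
    hence eq: "(2 * m choose m) * (fact m * fact m) = (fact (2 * m) :: nat)"
      by (simp add: algebra_simps)
    have "p dvd (fact (2 * m) :: nat)" using p by (simp add: prime_dvd_fact_iff)
    hence "p dvd (2 * m choose m) * (fact m * fact m)" by (simp add: eq)
    moreover have "\<not> p dvd (fact m :: nat)" using p by (simp add: prime_dvd_fact_iff)
    ultimately show "p dvd (2 * m choose m)" using p by (simp add: prime_dvd_mult_iff)
  qed
qed auto

definition chebyshev_theta :: "nat \<Rightarrow> real" where
  "chebyshev_theta n = (\<Sum>p\<in>primes_le n. ln (real p))"

lemma chebyshev_theta_mono: "m \<le> n \<Longrightarrow> chebyshev_theta m \<le> chebyshev_theta n"
  unfolding chebyshev_theta_def by (intro sum_mono2 ln_nonneg_primes_le) (auto simp: primes_le_def)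

lemma chebyshev_theta_double_le: "chebyshev_theta (2 * m) \<le> chebyshev_theta m + real m * ln 4"
proof -
  define Q where "Q = {p. prime p \<and> m < p \<and> p \<le> 2 * m}"
  have split: "primes_le (2 * m) = primes_le m \<union> Q" "primes_le m \<inter> Q = {}"
    by (auto simp: primes_le_def Q_def)
  have finQ: "finite Q" by (simp add: Q_def)
  have Q_pos: "\<forall>p\<in>Q. p > 0" by (auto simp: Q_def prime_gt_0_nat)
  have "chebyshev_theta (2 * m) = chebyshev_theta m + (\<Sum>p\<in>Q. ln (real p))"
    unfolding chebyshev_theta_def split(1) by (rule sum.union_disjoint) (use split finQ in auto)
  also have "(\<Sum>p\<in>Q. ln (real p)) = ln (real (\<Prod>Q))"
    using Q_pos by (simp add: ln_prod finQ of_nat_prod)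
  also have "\<dots> \<le> ln (real ((2 * m) choose m))"
  proof -
    have "\<Prod>Q \<le> (2 * m) choose m"
      using prod_primes_between_dvd_central_binomial[of m] by (intro dvd_imp_le) (auto simp: Q_def)
    moreover have "\<Prod>Q > 0" using finQ Q_pos by auto
    ultimately have "real (\<Prod>Q) \<le> real ((2 * m) choose m)" "0 < real (\<Prod>Q)"
      by (simp_all only: of_nat_le_iff of_nat_0_less_iff)
    thus ?thesis by (rule ln_mono)
  qed
  also have "\<dots> \<le> ln (4 ^ m)"
  proof -
    have "(2 * m) choose m \<le> (\<Sum>k\<le>2*m. (2*m) choose k)" by (rule member_le_sum) auto
    also have "\<dots> = 4 ^ m" by (simp add: choose_row_sum power_mult)
    finally have "real ((2 * m) choose m) \<le> 4 ^ m"
      by (metis of_nat_le_iff of_nat_numeral of_nat_power)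
    thus ?thesis by simp
  qed
  also have "\<dots> = real m * ln 4" by (simp add: ln_realpow)
  finally show ?thesis by simp
qed

lemma chebyshev_theta_le: "chebyshev_theta n \<le> 2 * ln 4 * real n"
proof (induction n rule: less_induct)
  case (less n)
  have l4: "ln (4::real) > 0" by simp
  show ?case
  proof (cases "n \<le> 1")
    case True
    thus ?thesis by (simp add: chebyshev_theta_def primes_le_le_1)
  next
    case False
    show ?thesis
    proof (cases "even n")
      case True
      then obtain m where m: "n = 2 * m" by auto
      have "chebyshev_theta n \<le> chebyshev_theta m + real m * ln 4"
        using chebyshev_theta_double_le m by simp
      also have "chebyshev_theta m \<le> 2 * ln 4 * real m" using less False m by auto
      finally have "chebyshev_theta n \<le> real m * (3 * ln 4)" using m by (simp add: algebra_simps)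
      also have "\<dots> \<le> real m * (4 * ln 4)" using l4 by (intro mult_left_mono) auto
      finally show ?thesis using m by (simp add: algebra_simps)
    next
      case odd: False
      then obtain m where m: "n = 2 * m + 1" using oddE by blast
      have "chebyshev_theta n \<le> chebyshev_theta (2 * (m + 1))"
        using m by (intro chebyshev_theta_mono) auto
      also have "\<dots> \<le> chebyshev_theta (m + 1) + real (m + 1) * ln 4"
        by (rule chebyshev_theta_double_le)
      also have "chebyshev_theta (m + 1) \<le> 2 * ln 4 * real (m + 1)" using less[of "m + 1"] False m by simp
      finally have "chebyshev_theta n \<le> 3 * ln 4 * real (m + 1)" by (simp add: algebra_simps)
      also have "\<dots> \<le> 2 * ln 4 * real n" using m False l4 by (simp add: algebra_simps)
      finally show ?thesis .
    qed
  qed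
qed

lemma sum_ln_prime_divisors_le:
  fixes n N :: nat
  assumes "n \<ge> 1"
  shows "(\<Sum>p\<in>primes_le N. if p dvd n then ln (real p) else 0) \<le> ln (real n)"
proof -
  define Q where "Q = {p\<in>primes_le N. p dvd n}"
  have finQ: "finite Q" by (simp add: Q_def)
  have Q_pos: "\<forall>p\<in>Q. p > 0" by (auto simp: Q_def primes_le_def prime_gt_0_nat)
  have "(\<Sum>p\<in>primes_le N. if p dvd n then ln (real p) else 0) = (\<Sum>p\<in>Q. ln (real p))"
    unfolding Q_def by (rule sum.inter_filter[symmetric]) simp
  also have "\<dots> = ln (\<Prod>p\<in>Q. real p)"
    using Q_pos by (simp add: ln_prod finQ)
  also have "\<dots> \<le> ln (real n)"
  proof (rule ln_mono)
    have "\<Prod>Q dvd n" by (rule prod_primes_dvd) (auto simp: finQ Q_def primes_le_def)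
    hence "\<Prod>Q \<le> n" using assms by (intro dvd_imp_le) auto
    hence "real (\<Prod>Q) \<le> real n" by (simp only: of_nat_le_iff)
    thus "(\<Prod>p\<in>Q. real p) \<le> real n" by (simp add: of_nat_prod)
    show "0 < (\<Prod>p\<in>Q. real p)" using Q_pos by (simp add: prod_pos)
  qed
  finally show ?thesis .
qed

lemma card_multiples:
  fixes p N :: nat
  assumes "p \<ge> 1"
  shows "card {n\<in>{1..N}. p dvd n} = N div p"
proof -
  have "{n\<in>{1..N}. p dvd n} = (\<lambda>i. p * i) ` {1..N div p}"
  proof (intro equalityI subsetI)
    fix n assume "n \<in> {n\<in>{1..N}. p dvd n}"
    then obtain i where i: "n = p * i" "1 \<le> p * i" "p * i \<le> N" by auto
    hence "i \<ge> 1" by (cases i) auto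
    moreover have "i \<le> N div p"
      using i assms by (simp add: less_eq_div_iff_mult_less_eq mult.commute)
    ultimately show "n \<in> (\<lambda>i. p * i) ` {1..N div p}" using i by auto
  next
    fix n assume "n \<in> (\<lambda>i. p * i) ` {1..N div p}"
    then obtain i where "i \<in> {1..N div p}" "n = p * i" by blast
    hence i: "n = p * i" "1 \<le> i" "i \<le> N div p" by auto
    have "p * i \<le> N" using i assms by (simp add: less_eq_div_iff_mult_less_eq mult.commute)
    moreover have "p * i \<ge> 1" using i assms by simp
    ultimately show "n \<in> {n\<in>{1..N}. p dvd n}" using i by auto
  qed
  also have "card \<dots> = card {1..N div p}"
    by (rule card_image) (use assms in \<open>auto simp: inj_on_def\<close>)
  finally show ?thesis by simp
qed

lemma real_div_minus_one_le_div:
  fixes N p :: nat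
  assumes "p \<ge> 1"
  shows "real N / real p - 1 \<le> real (N div p)"
proof -
  have e: "real N = real (N div p) * real p + real (N mod p)"
    by (metis of_nat_add of_nat_mult div_mult_mod_eq)
  have "real (N mod p) \<le> real p" using assms by simp
  hence "real N \<le> (real (N div p) + 1) * real p" using e by (simp add: algebra_simps)
  thus ?thesis using assms by (simp add: field_simps)
qed

definition mertens_sum :: "nat \<Rightarrow> real" where
  "mertens_sum N = (\<Sum>p\<in>primes_le N. ln (real p) / real p)"

text \<open>Count \<open>\<Sum>\<^sub>n\<^sub>\<le>\<^sub>N \<Sum>\<^sub>p\<^sub>|\<^sub>n log p\<close> in two ways; the error terms are controlled by \<open>\<theta>(N)\<close>.\<close>
lemma mertens_sum_le:
  fixes N :: nat
  assumes "N \<ge> 1"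
  shows "mertens_sum N \<le> ln (real N) + 2 * ln 4"
proof -
  let ?f = "\<lambda>n p. if p dvd n then ln (real p) else 0"
  have "(\<Sum>n\<in>{1..N}. \<Sum>p\<in>primes_le N. ?f n p) \<le> (\<Sum>n\<in>{1..N}. ln (real N))"
  proof (intro sum_mono)
    fix n assume "n \<in> {1..N}"
    hence "(\<Sum>p\<in>primes_le N. ?f n p) \<le> ln (real n)" by (intro sum_ln_prime_divisors_le) auto
    also have "\<dots> \<le> ln (real N)" using \<open>n \<in> {1..N}\<close> by simp
    finally show "(\<Sum>p\<in>primes_le N. ?f n p) \<le> ln (real N)" .
  qed
  also have "\<dots> = real N * ln (real N)" by simp
  also have "(\<Sum>n\<in>{1..N}. \<Sum>p\<in>primes_le N. ?f n p) = (\<Sum>p\<in>primes_le N. ln (real p) * real (N div p))"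
  proof -
    have "(\<Sum>n\<in>{1..N}. ?f n p) = ln (real p) * real (N div p)" if "p \<in> primes_le N" for p
    proof -
      have "(\<Sum>n\<in>{1..N}. ?f n p) = (\<Sum>n\<in>{n\<in>{1..N}. p dvd n}. ln (real p))"
        by (rule sum.inter_filter[symmetric]) simp
      moreover have "p \<ge> 1" using that prime_gt_0_nat[of p] by (simp add: primes_le_def)
      ultimately show ?thesis using card_multiples[of p N] by simp
    qed
    thus ?thesis by (subst sum.swap) (intro sum.cong refl)
  qed
  finally have upper: "(\<Sum>p\<in>primes_le N. ln (real p) * real (N div p)) \<le> real N * ln (real N)" .
  have "real N * mertens_sum N - chebyshev_theta N
      = (\<Sum>p\<in>primes_le N. ln (real p) * (real N / real p - 1))"
    by (simp add: mertens_sum_def chebyshev_theta_def algebra_simps sum_subtractf sum_distrib_left)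
  also have "\<dots> \<le> (\<Sum>p\<in>primes_le N. ln (real p) * real (N div p))"
  proof (intro sum_mono mult_left_mono)
    fix p assume p: "p \<in> primes_le N"
    show "real N / real p - 1 \<le> real (N div p)"
      using p prime_gt_0_nat[of p] by (intro real_div_minus_one_le_div) (simp add: primes_le_def)
    show "0 \<le> ln (real p)" using p by (rule ln_nonneg_primes_le)
  qed
  finally have "real N * mertens_sum N \<le> real N * ln (real N) + real N * (2 * ln 4)"
    using upper chebyshev_theta_le[of N] by (simp add: mult.commute)
  thus ?thesis using assms by (simp add: distrib_left[symmetric] mult_le_cancel_left_pos)
qed

lemma sum_by_parts:
  fixes r g :: "nat \<Rightarrow> real"
  shows "(\<Sum>n\<in>{1..N}. r n * g n) =
    (\<Sum>i\<in>{1..N}. r i) * g N + (\<Sum>n\<in>{1..<N}. (\<Sum>i\<in>{1..n}. r i) * (g n - g (Suc n)))"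
proof (induction N)
  case (Suc N)
  show ?case
  proof (cases "N = 0")
    case False
    have "(\<Sum>n\<in>{1..<Suc N}. (\<Sum>i\<in>{1..n}. r i) * (g n - g (Suc n))) =
        (\<Sum>n\<in>{1..<N}. (\<Sum>i\<in>{1..n}. r i) * (g n - g (Suc n))) + (\<Sum>i\<in>{1..N}. r i) * (g N - g (Suc N))"
      using False by (subst sum.atLeastLessThan_Suc) auto
    thus ?thesis using Suc by (simp add: algebra_simps)
  qed simp
qed simp

lemma one_minus_div_le_ln_diff:
  fixes a b :: real
  assumes "0 < a" "a \<le> b"
  shows "1 - a / b \<le> ln b - ln a"
  using ln_le_minus_one[of "a / b"] assms by (simp add: ln_div)

definition prime_reciprocal_sum :: "nat \<Rightarrow> real" where
  "prime_reciprocal_sum N = (\<Sum>p\<in>primes_le N. 1 / real p)"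

definition mertens_const :: real where
  "mertens_const = 1 + 2 * ln 4 / ln 2 - ln (ln 2)"

lemma sum_primes_le_eq:
  "(\<Sum>p\<in>primes_le N. f p) = (\<Sum>n\<in>{1..N}. if prime n then f n else 0)"
proof -
  have "primes_le N = {n\<in>{1..N}. prime n}" by (auto simp: primes_le_def prime_gt_0_nat Suc_le_eq)
  thus ?thesis by (simp only:) (rule sum.inter_filter, simp)
qed

lemma mertens_sum_mult_inverse_ln_diff_le:
  fixes n :: nat
  assumes n: "n \<ge> 2"
  defines "g \<equiv> \<lambda>n. 1 / ln (real n)"
  shows "mertens_sum n * (g n - g (Suc n))
    \<le> (ln (ln (real (Suc n))) - ln (ln (real n))) + 2 * ln 4 * (g n - g (Suc n))"
proof -
  have l0: "ln (real n) > 0" using n by simp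
  have l1: "ln (real n) \<le> ln (real (Suc n))" using n by simp
  have "g n - g (Suc n) \<ge> 0" using l0 l1 by (simp add: g_def frac_le)
  hence "mertens_sum n * (g n - g (Suc n)) \<le> (ln (real n) + 2 * ln 4) * (g n - g (Suc n))"
    using mertens_sum_le[of n] n by (intro mult_right_mono) auto
  also have "\<dots> = (1 - ln (real n) / ln (real (Suc n))) + 2 * ln 4 * (g n - g (Suc n))"
    using l0 l1 by (simp add: g_def field_simps add_divide_distrib)
  also have "1 - ln (real n) / ln (real (Suc n)) \<le> ln (ln (real (Suc n))) - ln (ln (real n))"
    by (rule one_minus_div_le_ln_diff[OF l0 l1])
  finally show ?thesis by simp
qed

text \<open>Partial summation of \<open>log p / p\<close> against \<open>1 / log n\<close>.\<close>
lemma prime_reciprocal_sum_le: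
  fixes N :: nat
  assumes N: "N \<ge> 2"
  shows "prime_reciprocal_sum N \<le> ln (ln (real N)) + mertens_const"
proof -
  define r where "r = (\<lambda>i. if prime i then ln (real i) / real i else 0)"
  define g :: "nat \<Rightarrow> real" where "g = (\<lambda>n. 1 / ln (real n))"
  have R: "(\<Sum>i\<in>{1..n}. r i) = mertens_sum n" for n
    by (simp add: mertens_sum_def sum_primes_le_eq r_def)
  have "prime_reciprocal_sum N = (\<Sum>n\<in>{1..N}. r n * g n)"
    unfolding prime_reciprocal_sum_def sum_primes_le_eq
    by (intro sum.cong refl) (auto simp: r_def g_def dest: prime_gt_1_nat)
  also have "\<dots> = mertens_sum N * g N + (\<Sum>n\<in>{1..<N}. mertens_sum n * (g n - g (Suc n)))"
    using sum_by_parts[of r g N] unfolding R .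
  also have "(\<Sum>n\<in>{1..<N}. mertens_sum n * (g n - g (Suc n)))
      = (\<Sum>n\<in>{2..<N}. mertens_sum n * (g n - g (Suc n)))"
  proof -
    have "{1..<N} = insert 1 {2..<N}" using N by auto
    moreover have "mertens_sum 1 = 0" by (simp add: mertens_sum_def primes_le_le_1)
    ultimately show ?thesis by simp
  qed
  also have "\<dots> \<le> (\<Sum>n\<in>{2..<N}. (ln (ln (real (Suc n))) - ln (ln (real n))) + 2 * ln 4 * (g n - g (Suc n)))"
    unfolding g_def by (intro sum_mono mertens_sum_mult_inverse_ln_diff_le) auto
  also have "\<dots> = (ln (ln (real N)) - ln (ln 2)) + 2 * ln 4 * (g 2 - g N)"
    using sum_Suc_diff'[OF N, of "\<lambda>n. ln (ln (real n))"] sum_Suc_diff'[OF N, of "\<lambda>n. - g n"]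
    by (simp add: sum.distrib sum_distrib_left[symmetric])
  finally have A: "prime_reciprocal_sum N
      \<le> mertens_sum N * g N + ((ln (ln (real N)) - ln (ln 2)) + 2 * ln 4 * (g 2 - g N))" by simp
  have lN: "ln (real N) \<ge> ln 2" using N by simp
  have lN0: "ln (real N) > 0" using lN ln_gt_zero[of 2] by linarith
  have gN: "g N \<ge> 0" "g N \<le> 1 / ln 2" using lN lN0 by (simp_all add: g_def frac_le)
  have "mertens_sum N * g N \<le> (ln (real N) + 2 * ln 4) * g N"
    using mertens_sum_le[of N] N gN by (intro mult_right_mono) auto
  also have "\<dots> = 1 + 2 * ln 4 * g N" using lN0 unfolding g_def by (simp add: add_divide_distrib)
  finally have "mertens_sum N * g N + 2 * ln 4 * (g 2 - g N) \<le> 1 + 2 * ln 4 * (1 / ln 2)"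
    by (simp add: g_def algebra_simps)
  thus ?thesis using A by (simp add: mertens_const_def)
qed

lemma sum_inverse_squares_le: "N \<ge> 1 \<Longrightarrow> (\<Sum>n\<in>{2..N}. 1 / real n ^ 2) \<le> 1 - 1 / real N"
proof (induction N rule: dec_induct)
  case (step N)
  have N: "real N \<ge> 1" using step(1) by simp
  have "1 / real (Suc N) ^ 2 \<le> 1 / (real N * (real N + 1))"
  proof (rule frac_le)
    show "0 < real N * (real N + 1)" using N by simp
    show "real N * (real N + 1) \<le> real (Suc N) ^ 2" by (simp add: power2_eq_square algebra_simps)
  qed auto
  also have "\<dots> = 1 / real N - 1 / real (Suc N)" using N by (simp add: field_simps)
  finally show ?case using step by (subst sum.cl_ivl_Suc) auto
qed simp

lemma sum_primes_inverse_squares_le: "(\<Sum>p\<in>primes_le N. 1 / real p ^ 2) \<le> 1"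
proof (cases "N \<ge> 1")
  case True
  have "(\<Sum>p\<in>primes_le N. 1 / real p ^ 2) \<le> (\<Sum>n\<in>{2..N}. 1 / real n ^ 2)"
    by (intro sum_mono2) (auto simp: primes_le_def prime_ge_2_nat)
  also have "\<dots> \<le> 1 - 1 / real N" using sum_inverse_squares_le[OF True] .
  finally show ?thesis by (smt (verit) divide_nonneg_nonneg of_nat_0_le_iff)
qed (simp add: primes_le_le_1)

lemma inverse_power_three_halves_le:
  fixes a b :: real
  assumes a: "a > 0" and ab: "a \<le> b" and b2: "b^2 = a^2 + 1"
  shows "1 / (b^2 * b) \<le> 2 / a - 2 / b"
proof -
  have b: "b > 0" using a ab by linarith
  have "(b - a) * (b + a) = 1" using b2 by (simp add: algebra_simps power2_eq_square)
  hence ba: "b - a = 1 / (a + b)" using a b by (simp add: field_simps)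
  have "2 / a - 2 / b = 2 * (b - a) / (a * b)" using a b by (simp add: field_simps)
  also have "\<dots> = 2 / (a * b * (a + b))" using a b by (simp add: ba field_simps)
  also have "2 / (a * b * (a + b)) \<ge> 2 / (b * b * (b + b))"
    using a b ab by (intro divide_left_mono mult_mono add_mono) (auto intro!: mult_pos_pos)
  moreover have "2 / (b * b * (b + b)) = 1 / (b^2 * b)" using b by (simp add: field_simps power2_eq_square)
  ultimately show ?thesis by (simp add: power2_eq_square)
qed

lemma sum_inverse_power_three_halves_le:
  "N \<ge> 1 \<Longrightarrow> (\<Sum>n\<in>{2..N}. 1 / (real n * sqrt (real n))) \<le> 2 - 2 / sqrt (real N)"
proof (induction N rule: dec_induct)
  case (step N)
  have "1 / (sqrt (real (Suc N))^2 * sqrt (real (Suc N))) \<le> 2 / sqrt (real N) - 2 / sqrt (real (Suc N))"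
    using step(1) by (intro inverse_power_three_halves_le) auto
  thus ?case using step by (subst sum.cl_ivl_Suc) auto
qed simp

lemma ln_le_2_sqrt: "x > 0 \<Longrightarrow> ln x \<le> 2 * sqrt x"
  using ln_le_minus_one[of "sqrt x"] by (simp add: ln_sqrt)

lemma sum_primes_ln_div_square_le: "(\<Sum>p\<in>primes_le N. ln (real p) / real p ^ 2) \<le> 4"
proof (cases "N \<ge> 1")
  case True
  have "(\<Sum>p\<in>primes_le N. ln (real p) / real p ^ 2) \<le> (\<Sum>p\<in>primes_le N. 2 * (1 / (real p * sqrt (real p))))"
  proof (intro sum_mono)
    fix p assume "p \<in> primes_le N"
    hence p: "real p > 0" by (auto simp: primes_le_def prime_gt_0_nat)
    have "ln (real p) / real p ^ 2 \<le> 2 * sqrt (real p) / real p ^ 2"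
      using ln_le_2_sqrt[OF p] p by (intro divide_right_mono) auto
    also have "\<dots> = 2 * (1 / (real p * sqrt (real p)))"
      using p by (simp add: field_simps power2_eq_square)
    finally show "ln (real p) / real p ^ 2 \<le> 2 * (1 / (real p * sqrt (real p)))" .
  qed
  also have "\<dots> \<le> (\<Sum>n\<in>{2..N}. 2 * (1 / (real n * sqrt (real n))))"
    by (intro sum_mono2) (auto simp: primes_le_def prime_ge_2_nat)
  also have "\<dots> = 2 * (\<Sum>n\<in>{2..N}. 1 / (real n * sqrt (real n)))"
    by (simp add: sum_distrib_left)
  also have "\<dots> \<le> 2 * 2"
    using sum_inverse_power_three_halves_le[OF True] by (smt (verit) real_sqrt_ge_zero divide_nonneg_nonneg of_nat_0_le_iff)
  finally show ?thesis by simp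
qed (simp add: primes_le_le_1)

section \<open>Partial sums of multiplicative functions\<close>

lemma ln_eq_sum_multiplicity:
  fixes n :: nat
  assumes "n > 0"
  shows "ln (real n) = (\<Sum>p\<in>prime_factors n. real (multiplicity p n) * ln (real p))"
proof -
  have "real n = (\<Prod>p\<in>prime_factors n. real p ^ multiplicity p n)"
    using arg_cong[OF prime_factorization_nat[OF assms], of real] by (simp add: of_nat_prod)
  hence "ln (real n) = ln (\<Prod>p\<in>prime_factors n. real p ^ multiplicity p n)" by simp
  also have "\<dots> = (\<Sum>p\<in>prime_factors n. ln (real p ^ multiplicity p n))"
    by (rule ln_prod) (auto simp: in_prime_factors_iff prime_gt_0_nat)
  also have "\<dots> = (\<Sum>p\<in>prime_factors n. real (multiplicity p n) * ln (real p))"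
    by (intro sum.cong refl) (auto simp: ln_realpow prime_factors_multiplicity prime_gt_0_nat)
  finally show ?thesis .
qed

lemma mult_by_exponents_split_prime_power:
  fixes n p :: nat
  assumes "n > 0" "p \<in> prime_factors n"
  shows "mult_by_exponents w n =
    w (multiplicity p n) * mult_by_exponents w (n div p ^ multiplicity p n)"
proof -
  define j where "j = multiplicity p n"
  have p: "prime p" using assms(2) by (auto simp: in_prime_factors_iff)
  have n: "n = p ^ j * (n div p ^ j)" by (simp add: j_def multiplicity_dvd)
  have "j \<ge> 1" using assms by (auto simp: j_def prime_factors_multiplicity)
  moreover have "n div p ^ j > 0" using n assms(1) by (metis gr0I mult_0_right)
  moreover have "\<not> p dvd n div p ^ j"
    unfolding j_def by (rule multiplicity_decompose) (use assms(1) p in auto)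
  ultimately have "mult_by_exponents w (p ^ j * (n div p ^ j)) = w j * mult_by_exponents w (n div p ^ j)"
    by (intro mult_by_exponents_prime_power_mult[OF p])
  thus ?thesis using n[symmetric] by (simp add: j_def)
qed

text \<open>
  The Hall--Tenenbaum step: write \<open>log n = \<Sum>\<^sub>p v\<^sub>p(n) log p\<close> and split off the full
  power of \<open>p\<close> from \<open>n\<close>, as \<open>n = p^j m\<close> with \<open>p\<close> not dividing \<open>m\<close>.
\<close>
lemma sum_mult_by_exponents_ln_le:
  fixes w :: "nat \<Rightarrow> real"
  assumes w_nonneg: "\<And>j. w j \<ge> 0"
  shows "(\<Sum>n=1..N. mult_by_exponents w n * ln (real n))
    \<le> (\<Sum>m=1..N. mult_by_exponents w m *
          (\<Sum>p\<in>primes_le N. \<Sum>j=1..N. if p ^ j * m \<le> N then w j * real j * ln (real p) else 0))"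
proof -
  let ?f = "mult_by_exponents w"
  let ?S = "Sigma {1..N} prime_factors"
  define g where "g = (\<lambda>(m::nat, p::nat, j::nat).
    if p ^ j * m \<le> N then ?f m * (w j * real j * ln (real p)) else 0)"
  have "(\<Sum>n=1..N. ?f n * ln (real n)) =
      (\<Sum>n=1..N. \<Sum>p\<in>prime_factors n. ?f n * (real (multiplicity p n) * ln (real p)))"
    by (intro sum.cong refl) (auto simp: ln_eq_sum_multiplicity sum_distrib_left)
  also have "\<dots> = (\<Sum>(n, p)\<in>?S. ?f n * (real (multiplicity p n) * ln (real p)))"
    by (rule sum.Sigma) auto
  also have "\<dots> \<le> sum g ({1..N} \<times> primes_le N \<times> {1..N})"
  proof (rule sum_le_included[where i = "\<lambda>(m, p, j). (p ^ j * m, p)"])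
    show "\<forall>y\<in>{1..N} \<times> primes_le N \<times> {1..N}. 0 \<le> g y"
      by (auto simp: g_def w_nonneg mult_by_exponents_nonneg primes_le_def
               intro!: mult_nonneg_nonneg dest: prime_gt_0_nat)
    show "\<forall>x\<in>?S. \<exists>y\<in>{1..N} \<times> primes_le N \<times> {1..N}. (case y of (m, p, j) \<Rightarrow> (p ^ j * m, p)) = x
        \<and> (case x of (n, p) \<Rightarrow> ?f n * (real (multiplicity p n) * ln (real p))) \<le> g y"
    proof
      fix x assume "x \<in> ?S"
      then obtain n p where x: "x = (n, p)" and n: "n \<in> {1..N}" and p: "p \<in> prime_factors n" by auto
      define j where "j = multiplicity p n"
      define m where "m = n div p ^ j"
      have pr: "prime p" using p by (auto simp: in_prime_factors_iff)
      have nm: "n = p ^ j * m" by (simp add: m_def j_def multiplicity_dvd)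
      have "m \<ge> 1" "m \<le> n"
        using n nm pr by (auto simp: Suc_le_eq prime_gt_0_nat intro!: gr0I)
      hence m: "m \<ge> 1" "m \<le> N" using n by auto
      have "p \<le> N" using p n by (auto simp: in_prime_factors_iff intro: dvd_imp_le order_trans)
      moreover have "j \<ge> 1" "j \<le> N"
        using p n multiplicity_le_self[OF pr, of n] by (auto simp: j_def prime_factors_multiplicity)
      moreover have "?f n = w j * ?f m"
        using mult_by_exponents_split_prime_power[of n p w] n p by (simp add: j_def m_def)
      ultimately show "\<exists>y\<in>{1..N} \<times> primes_le N \<times> {1..N}. (case y of (m, p, j) \<Rightarrow> (p ^ j * m, p)) = x
        \<and> (case x of (n, p) \<Rightarrow> ?f n * (real (multiplicity p n) * ln (real p))) \<le> g y"
        using m n nm[symmetric] pr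
        by (intro bexI[of _ "(m, p, j)"]) (auto simp: x g_def j_def[symmetric] primes_le_def mult_ac)
    qed
  qed (auto simp: primes_le_def)
  also have "\<dots> = (\<Sum>m=1..N. \<Sum>p\<in>primes_le N. \<Sum>j=1..N. g (m, p, j))"
    by (simp add: sum.cartesian_product)
  also have "\<dots> = (\<Sum>m=1..N. ?f m *
      (\<Sum>p\<in>primes_le N. \<Sum>j=1..N. if p ^ j * m \<le> N then w j * real j * ln (real p) else 0))"
    unfolding g_def sum_distrib_left by (intro sum.cong refl) auto
  finally show ?thesis .
qed

lemma sum_primes_le_mult_le:
  fixes m N :: nat
  assumes m: "m \<ge> 1"
  shows "(\<Sum>p\<in>primes_le N. if p * m \<le> N then ln (real p) else 0) \<le> 2 * ln 4 * (real N / real m)"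
proof -
  have "{p\<in>primes_le N. p * m \<le> N} = primes_le (N div m)"
  proof (intro equalityI subsetI)
    fix p assume p: "p \<in> primes_le (N div m)"
    have "p \<le> N div m" using p by (simp add: primes_le_def)
    hence "p \<le> N" using div_le_dividend[of N m] by linarith
    with p show "p \<in> {p\<in>primes_le N. p * m \<le> N}"
      using m by (auto simp: primes_le_def less_eq_div_iff_mult_less_eq)
  qed (use m in \<open>auto simp: primes_le_def less_eq_div_iff_mult_less_eq\<close>)
  hence "(\<Sum>p\<in>primes_le N. if p * m \<le> N then ln (real p) else 0) = chebyshev_theta (N div m)"
    by (simp add: sum.inter_filter[symmetric] chebyshev_theta_def)
  also have "\<dots> \<le> 2 * ln 4 * real (N div m)" by (rule chebyshev_theta_le)
  also have "\<dots> \<le> 2 * ln 4 * (real N / real m)" by (intro mult_left_mono of_nat_div_le_of_nat) auto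
  finally show ?thesis .
qed

lemma if_le_div_mult:
  fixes q m N :: nat and a :: real
  assumes "a \<ge> 0" "q > 0" "m > 0"
  shows "(if q * m \<le> N then a else 0) \<le> real N / (real q * real m) * a"
proof (cases "q * m \<le> N")
  case True
  hence "real q * real m \<le> real N" by (metis of_nat_le_iff of_nat_mult)
  hence "1 \<le> real N / (real q * real m)" using assms by simp
  from mult_right_mono[OF this assms(1)] show ?thesis using True by simp
qed (use assms in simp)

locale prime_power_weight =
  fixes w :: "nat \<Rightarrow> real" and K E :: real
  assumes weight_0: "w 0 = 1"
    and weight_nonneg: "w j \<ge> 0"
    and weight_1: "w 1 = K"
    and weight_tail: "prime p \<Longrightarrow> (\<Sum>j=2..N. real j * w j / real p ^ j) \<le> E / real p ^ 2"
begin

lemma weight_Suc_0 [simp]: "w (Suc 0) = K"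
  using weight_1 by simp

lemma K_nonneg: "K \<ge> 0"
  using weight_nonneg[of 1] by simp

lemma E_nonneg: "E \<ge> 0"
  using weight_tail[of 2 0] by simp

lemma local_Euler_factor_le:
  assumes "prime p"
  shows "(\<Sum>j\<le>N. w j / real p ^ j) \<le> exp (K / real p + E / real p ^ 2)"
proof -
  have p: "real p \<ge> 2" using prime_ge_2_nat[OF assms] by simp
  have "(\<Sum>j=2..N. w j / real p ^ j) \<le> (\<Sum>j=2..N. real j * w j / real p ^ j)"
  proof (intro sum_mono divide_right_mono)
    fix j assume "j \<in> {2..N}"
    thus "w j \<le> real j * w j" using mult_right_mono[of 1 "real j" "w j"] weight_nonneg by simp
  qed simp
  also have "\<dots> \<le> E / real p ^ 2" by (rule weight_tail[OF assms])
  finally have tail: "(\<Sum>j=2..N. w j / real p ^ j) \<le> E / real p ^ 2" .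
  have "(\<Sum>j\<le>N. w j / real p ^ j) \<le> 1 + K / real p + (\<Sum>j=2..N. w j / real p ^ j)"
  proof (cases "N = 0")
    case True thus ?thesis using K_nonneg p by (simp add: weight_0)
  next
    case False
    hence "{..N} = {0, 1} \<union> {2..N}" by auto
    thus ?thesis by (simp add: sum.union_disjoint weight_0)
  qed
  also have "\<dots> \<le> 1 + (K / real p + E / real p ^ 2)" using tail by simp
  also have "\<dots> \<le> exp (K / real p + E / real p ^ 2)" by (rule exp_ge_add_one_self)
  finally show ?thesis .
qed

lemma sum_mult_by_exponents_div_le:
  assumes N: "N \<ge> 2"
  shows "(\<Sum>m=1..N. mult_by_exponents w m / m) \<le> exp (K * mertens_const + E) * ln (real N) powr K"
proof -
  have lnN: "ln (real N) > 0" using N by simp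
  have "(\<Sum>m=1..N. mult_by_exponents w m / m) \<le> (\<Prod>p\<in>primes_le N. \<Sum>j\<le>N. w j / real p ^ j)"
    by (rule sum_mult_by_exponents_div_le_Euler_product[where w = w, OF weight_0 weight_nonneg])
  also have "\<dots> \<le> (\<Prod>p\<in>primes_le N. exp (K / real p + E / real p ^ 2))"
    by (intro prod_mono conjI local_Euler_factor_le sum_nonneg divide_nonneg_nonneg weight_nonneg)
       (auto simp: primes_le_def)
  also have "\<dots> = exp (K * prime_reciprocal_sum N + E * (\<Sum>p\<in>primes_le N. 1 / real p ^ 2))"
    by (simp add: exp_sum[symmetric] prime_reciprocal_sum_def sum.distrib sum_distrib_left)
  also have "\<dots> \<le> exp (K * (ln (ln (real N)) + mertens_const) + E)"
    using mult_left_mono[OF prime_reciprocal_sum_le[OF N] K_nonneg]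
      mult_left_mono[OF sum_primes_inverse_squares_le[of N] E_nonneg] by simp
  also have "\<dots> = exp (K * mertens_const + E) * ln (real N) powr K"
    using lnN by (simp add: powr_def exp_add[symmetric] algebra_simps)
  finally show ?thesis .
qed

lemma sum_prime_power_tail_le:
  assumes m: "m \<ge> 1"
  shows "(\<Sum>p\<in>primes_le N. \<Sum>j=2..N. if p ^ j * m \<le> N then w j * real j * ln (real p) else 0)
    \<le> 4 * E * (real N / real m)"
proof -
  have "(\<Sum>p\<in>primes_le N. \<Sum>j=2..N. if p ^ j * m \<le> N then w j * real j * ln (real p) else 0)
      \<le> (\<Sum>p\<in>primes_le N. real N / real m * ln (real p) * (E / real p ^ 2))"
  proof (intro sum_mono)
    fix p assume p: "p \<in> primes_le N"
    have pr: "prime p" using p by (simp add: primes_le_def)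
    have lp: "ln (real p) \<ge> 0" using p by (rule ln_nonneg_primes_le)
    have "(\<Sum>j=2..N. if p ^ j * m \<le> N then w j * real j * ln (real p) else 0)
        \<le> (\<Sum>j=2..N. real N / (real (p ^ j) * real m) * (w j * real j * ln (real p)))"
      using m lp pr by (intro sum_mono if_le_div_mult mult_nonneg_nonneg weight_nonneg)
                       (auto simp: prime_gt_0_nat)
    also have "\<dots> = real N / real m * ln (real p) * (\<Sum>j=2..N. real j * w j / real p ^ j)"
      by (simp add: sum_distrib_left field_simps)
    also have "\<dots> \<le> real N / real m * ln (real p) * (E / real p ^ 2)"
      using weight_tail[OF pr, of N] lp by (intro mult_left_mono) auto
    finally show "(\<Sum>j=2..N. if p ^ j * m \<le> N then w j * real j * ln (real p) else 0)
        \<le> real N / real m * ln (real p) * (E / real p ^ 2)" .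
  qed
  also have "\<dots> = real N / real m * E * (\<Sum>p\<in>primes_le N. ln (real p) / real p ^ 2)"
    by (simp add: sum_distrib_left mult_ac)
  also have "\<dots> \<le> real N / real m * E * 4"
    using sum_primes_ln_div_square_le E_nonneg by (intro mult_left_mono) auto
  finally show ?thesis by (simp add: mult_ac)
qed

lemma sum_prime_powers_le:
  assumes m: "m \<in> {1..N}"
  shows "(\<Sum>p\<in>primes_le N. \<Sum>j=1..N. if p ^ j * m \<le> N then w j * real j * ln (real p) else 0)
    \<le> (2 * ln 4 * K + 4 * E) * (real N / real m)"
proof -
  have "{1..N} = insert 1 {2..N}" using m by auto
  hence "(\<Sum>j=1..N. if p ^ j * m \<le> N then w j * real j * ln (real p) else 0)
      = K * (if p * m \<le> N then ln (real p) else 0)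
      + (\<Sum>j=2..N. if p ^ j * m \<le> N then w j * real j * ln (real p) else 0)" for p
    by simp
  hence "(\<Sum>p\<in>primes_le N. \<Sum>j=1..N. if p ^ j * m \<le> N then w j * real j * ln (real p) else 0)
      = K * (\<Sum>p\<in>primes_le N. if p * m \<le> N then ln (real p) else 0)
      + (\<Sum>p\<in>primes_le N. \<Sum>j=2..N. if p ^ j * m \<le> N then w j * real j * ln (real p) else 0)"
    by (simp add: sum.distrib sum_distrib_left)
  also have "\<dots> \<le> K * (2 * ln 4 * (real N / real m)) + 4 * E * (real N / real m)"
    using m by (intro add_mono mult_left_mono sum_primes_le_mult_le sum_prime_power_tail_le K_nonneg) auto
  finally show ?thesis by (simp add: algebra_simps)
qed

lemma sum_mult_by_exponents_ln_le_const:
  "(\<Sum>n=1..N. mult_by_exponents w n * ln (real n))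
    \<le> (2 * ln 4 * K + 4 * E) * real N * (\<Sum>m=1..N. mult_by_exponents w m / real m)"
proof -
  have "(\<Sum>n=1..N. mult_by_exponents w n * ln (real n))
      \<le> (\<Sum>m=1..N. mult_by_exponents w m * ((2 * ln 4 * K + 4 * E) * (real N / real m)))"
    using sum_mult_by_exponents_ln_le[where w = w and N = N, OF weight_nonneg]
    by (elim order_trans) (intro sum_mono mult_left_mono sum_prime_powers_le mult_by_exponents_nonneg weight_nonneg)
  also have "\<dots> = (2 * ln 4 * K + 4 * E) * real N * (\<Sum>m=1..N. mult_by_exponents w m / real m)"
    unfolding sum_distrib_left by (intro sum.cong refl) (simp add: mult_ac)
  finally show ?thesis .
qed

text \<open>Write \<open>log N = log n + log (N/n)\<close> and use \<open>log (N/n) \<le> N/n\<close>.\<close>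
lemma sum_mult_by_exponents_le:
  assumes N: "N \<ge> 2"
  shows "(\<Sum>n=1..N. mult_by_exponents w n)
    \<le> (2 * ln 4 * K + 4 * E + 1) * exp (K * mertens_const + E) * real N * ln (real N) powr (K - 1)"
proof -
  let ?f = "mult_by_exponents w"
  define S where "S = (\<Sum>m=1..N. ?f m / real m)"
  have f_nonneg: "?f n \<ge> 0" for n by (rule mult_by_exponents_nonneg[OF weight_nonneg])
  have lnN: "ln (real N) > 0" using N by simp
  have "(\<Sum>n=1..N. ?f n) * ln (real N) = (\<Sum>n=1..N. ?f n * ln (real N))"
    by (rule sum_distrib_right)
  also have "\<dots> = (\<Sum>n=1..N. ?f n * ln (real n)) + (\<Sum>n=1..N. ?f n * ln (real N / real n))"
    unfolding sum.distrib[symmetric] by (intro sum.cong refl) (auto simp: ln_div algebra_simps)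
  also have "\<dots> \<le> (2 * ln 4 * K + 4 * E) * real N * S + real N * S"
  proof (rule add_mono)
    show "(\<Sum>n=1..N. ?f n * ln (real n)) \<le> (2 * ln 4 * K + 4 * E) * real N * S"
      unfolding S_def by (rule sum_mult_by_exponents_ln_le_const)
    have "(\<Sum>n=1..N. ?f n * ln (real N / real n)) \<le> (\<Sum>n=1..N. ?f n * (real N / real n))"
      using N by (intro sum_mono mult_left_mono f_nonneg ln_bound) auto
    also have "\<dots> = real N * S"
      unfolding S_def sum_distrib_left by (intro sum.cong refl) (simp add: mult_ac)
    finally show "(\<Sum>n=1..N. ?f n * ln (real N / real n)) \<le> real N * S" .
  qed
  also have "\<dots> = (2 * ln 4 * K + 4 * E + 1) * real N * S" by (simp add: algebra_simps)
  also have "\<dots> \<le> (2 * ln 4 * K + 4 * E + 1) * real N * (exp (K * mertens_const + E) * ln (real N) powr K)"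
    using sum_mult_by_exponents_div_le[OF N, folded S_def] K_nonneg E_nonneg
    by (intro mult_left_mono) auto
  also have "ln (real N) powr K = ln (real N) powr (K - 1) * ln (real N)"
    using lnN by (simp add: powr_diff)
  finally show ?thesis using lnN by (simp add: mult_ac)
qed

end

section \<open>The weights \<open>c\<^sub>k(j)\<^sup>s\<close>\<close>

lemma power_le_const_mult_exp:
  fixes b :: real
  assumes b: "b > 1" and m: "m > 0"
  obtains B where "B > 0" "\<And>j. real (Suc j) ^ m \<le> B * b ^ j"
proof
  define t where "t = ln b"
  have t: "t > 0" using b by (simp add: t_def)
  show "(real m / t) ^ m * b > 0" using t m b by simp
  fix j
  define x where "x = real (Suc j) * t"
  have x0: "x \<ge> 0" using t by (simp add: x_def)
  have "x / real m = (t / real m) * real (Suc j)" by (simp add: x_def)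
  hence "(t / real m) ^ m * real (Suc j) ^ m = (x / real m) ^ m"
    by (simp only: power_mult_distrib)
  also have "\<dots> \<le> (1 + x / real m) ^ m" using x0 m by (intro power_mono) auto
  also have "\<dots> \<le> exp x" using x0 m by (intro exp_ge_one_plus_x_over_n_power_n) auto
  also have "exp x = exp t ^ Suc j" unfolding x_def by (rule exp_of_nat_mult)
  also have "\<dots> = b ^ Suc j" using b by (simp add: t_def)
  finally have A: "(t / real m) ^ m * real (Suc j) ^ m \<le> b ^ Suc j" .
  have "real (Suc j) ^ m = (real m / t) ^ m * ((t / real m) ^ m * real (Suc j) ^ m)"
    using t m by (simp add: power_divide field_simps)
  also have "\<dots> \<le> (real m / t) ^ m * b ^ Suc j"
    using A t by (intro mult_left_mono) auto
  finally show "real (Suc j) ^ m \<le> (real m / t) ^ m * b * b ^ j" by (simp add: mult_ac)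
qed

lemma sum_geometric_tail_le:
  fixes p :: real
  assumes "p \<ge> 2"
  shows "(\<Sum>j=2..N. (7/4) ^ j / p ^ j) \<le> 49 / (2 * p^2)"
proof -
  define x where "x = 7 / (4 * p)"
  have x0: "x > 0" and x1: "x \<le> 7/8" using assms by (auto simp: x_def field_simps)
  have "(\<Sum>j=2..N. (7/4) ^ j / p ^ j) = (\<Sum>j=2..N. x ^ j)"
    by (simp add: x_def power_divide)
  also have "\<dots> \<le> x^2 / (1 - x)"
  proof (cases "N < 2")
    case False
    hence "(\<Sum>j=2..N. x ^ j) = (x^2 - x ^ Suc N) / (1 - x)" using x1 by (simp add: sum_gp)
    also have "\<dots> \<le> x^2 / (1 - x)" using x0 x1 by (intro divide_right_mono) auto
    finally show ?thesis .
  qed (use x0 x1 in simp)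
  also have "\<dots> \<le> x^2 * 8"
    using x0 x1 mult_left_mono[of "1 / (1 - x)" 8 "x^2"] by (simp add: field_simps)
  also have "\<dots> = 49 / (2 * p^2)" using assms by (simp add: x_def field_simps power2_eq_square)
  finally show ?thesis .
qed

lemma prime_power_weight_weak_compositions:
  assumes k: "k \<ge> 1" and s: "s \<le> 1"
  obtains E where "prime_power_weight (\<lambda>j. real (weak_compositions k j) powr s) (real k powr s) E"
proof -
  obtain B where B: "B > 0" "\<And>j. real (Suc j) ^ (k + 1) \<le> B * (7/4) ^ j"
    using power_le_const_mult_exp[of "7/4" "k + 1"] by auto
  have jw: "real j * real (weak_compositions k j) powr s \<le> B * (7/4) ^ j" for j
  proof -
    have c: "real (weak_compositions k j) \<ge> 1" using weak_compositions_pos[OF k, of j] by simp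
    have "real (weak_compositions k j) powr s \<le> real (weak_compositions k j)"
      using c s powr_mono[of s 1 "real (weak_compositions k j)"] by simp
    also have "\<dots> \<le> real (Suc j) ^ k"
      using weak_compositions_le_power[of k j] by (metis Suc_eq_plus1 of_nat_le_iff of_nat_power)
    finally have "real j * real (weak_compositions k j) powr s \<le> real (Suc j) * real (Suc j) ^ k"
      by (intro mult_mono) auto
    thus ?thesis using B(2)[of j] by simp
  qed
  show ?thesis
  proof (rule that, unfold_locales)
    fix p N :: nat assume "prime p"
    hence p: "real p \<ge> 2" using prime_ge_2_nat by simp
    have "(\<Sum>j=2..N. real j * real (weak_compositions k j) powr s / real p ^ j)
        \<le> (\<Sum>j=2..N. B * ((7/4) ^ j / real p ^ j))"
      using jw p by (intro sum_mono) (simp add: divide_right_mono)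
    also have "\<dots> = B * (\<Sum>j=2..N. (7/4) ^ j / real p ^ j)" by (simp add: sum_distrib_left)
    also have "\<dots> \<le> B * (49 / (2 * real p ^ 2))"
      using B(1) sum_geometric_tail_le[OF p] by (intro mult_left_mono) auto
    finally show "(\<Sum>j=2..N. real j * real (weak_compositions k j) powr s / real p ^ j)
        \<le> B * 49 / 2 / real p ^ 2" by simp
  qed (simp_all add: weak_compositions_0_right weak_compositions_1_right[unfolded One_nat_def])
qed

lemma sum_mult_by_exponents_weak_compositions_le:
  assumes "k \<ge> 1" "s \<le> 1"
  obtains C where "\<And>N. N \<ge> 2 \<Longrightarrow>
    (\<Sum>n=1..N. mult_by_exponents (\<lambda>j. real (weak_compositions k j) powr s) n)
      \<le> C * real N * ln (real N) powr (real k powr s - 1)"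
  using prime_power_weight_weak_compositions[OF assms] prime_power_weight.sum_mult_by_exponents_le
  by metis

section \<open>Counting intervals with a large divisor sum\<close>

lemma card_ge_le_sum_div:
  fixes f :: "'a \<Rightarrow> real"
  assumes "finite R" "\<And>x. x \<in> R \<Longrightarrow> f x \<ge> 0" "c > 0"
  shows "real (card {x\<in>R. c \<le> f x}) \<le> (\<Sum>x\<in>R. f x) / c"
proof -
  have "real (card {x\<in>R. c \<le> f x}) \<le> (\<Sum>x\<in>{x\<in>R. c \<le> f x}. f x / c)"
    using assms(3) by (subst real_of_card, intro sum_mono) simp
  also have "\<dots> \<le> (\<Sum>x\<in>R. f x / c)" using assms by (intro sum_mono2) auto
  finally show ?thesis by (simp add: sum_divide_distrib)
qed

text \<open>Rankin's trick: \<open>1 \<le> (A/T)^s\<close> when \<open>A \<ge> T\<close>, and \<open>A \<le> A^s T^(1 - s)\<close> when \<open>A < T\<close>.\<close>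
lemma card_large_sums_le:
  fixes R :: "'a set" and I :: "'a \<Rightarrow> 'b set" and d A :: "'b \<Rightarrow> real"
  assumes R: "finite R" and I: "\<And>x. x \<in> R \<Longrightarrow> finite (I x)"
    and d_le: "\<And>x n. x \<in> R \<Longrightarrow> n \<in> I x \<Longrightarrow> d n \<le> A n" and A_nonneg: "\<And>n. A n \<ge> 0"
    and s: "0 \<le> s" "s \<le> 1" and T: "T > 0" and c: "c > 0"
  shows "real (card {x\<in>R. (\<Sum>n\<in>I x. d n) > c})
    \<le> (1 / T powr s + T powr (1 - s) / c) * (\<Sum>x\<in>R. \<Sum>n\<in>I x. A n powr s)"
proof -
  define g1 where "g1 = (\<lambda>x. \<Sum>n\<in>I x. A n powr s / T powr s)"
  define g2 where "g2 = (\<lambda>x. \<Sum>n\<in>I x. A n powr s * T powr (1 - s))"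
  have g_nonneg: "g1 x \<ge> 0" "g2 x \<ge> 0" for x
    unfolding g1_def g2_def by (simp_all add: sum_nonneg)
  have sub: "{x\<in>R. (\<Sum>n\<in>I x. d n) > c} \<subseteq> {x\<in>R. 1 \<le> g1 x} \<union> {x\<in>R. c \<le> g2 x}"
  proof
    fix x assume x: "x \<in> {x\<in>R. (\<Sum>n\<in>I x. d n) > c}"
    show "x \<in> {x\<in>R. 1 \<le> g1 x} \<union> {x\<in>R. c \<le> g2 x}"
    proof (cases "\<exists>n\<in>I x. A n \<ge> T")
      case True
      then obtain n where n: "n \<in> I x" "T \<le> A n" by blast
      have "1 \<le> A n powr s / T powr s" using n T s by (simp add: powr_mono2)
      also have "\<dots> \<le> g1 x" unfolding g1_def by (rule member_le_sum) (use n I x in auto)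
      finally show ?thesis using x by simp
    next
      case False
      have "(\<Sum>n\<in>I x. d n) \<le> g2 x" unfolding g2_def
      proof (rule sum_mono)
        fix n assume n: "n \<in> I x"
        have "d n \<le> A n powr s * A n powr (1 - s)"
          using d_le[OF _ n] x A_nonneg[of n] by (simp add: powr_add[symmetric])
        also have "\<dots> \<le> A n powr s * T powr (1 - s)"
          using False n A_nonneg[of n] s by (intro mult_left_mono powr_mono2) auto
        finally show "d n \<le> A n powr s * T powr (1 - s)" .
      qed
      thus ?thesis using x by auto
    qed
  qed
  have "finite ({x\<in>R. 1 \<le> g1 x} \<union> {x\<in>R. c \<le> g2 x})" using R by simp
  hence "card {x\<in>R. (\<Sum>n\<in>I x. d n) > c} \<le> card ({x\<in>R. 1 \<le> g1 x} \<union> {x\<in>R. c \<le> g2 x})"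
    using sub by (rule card_mono)
  also have "\<dots> \<le> card {x\<in>R. 1 \<le> g1 x} + card {x\<in>R. c \<le> g2 x}" by (rule card_Un_le)
  finally have "card {x\<in>R. (\<Sum>n\<in>I x. d n) > c} \<le> card {x\<in>R. 1 \<le> g1 x} + card {x\<in>R. c \<le> g2 x}" .
  hence "real (card {x\<in>R. (\<Sum>n\<in>I x. d n) > c})
      \<le> real (card {x\<in>R. 1 \<le> g1 x}) + real (card {x\<in>R. c \<le> g2 x})" by linarith
  also have "\<dots> \<le> (\<Sum>x\<in>R. g1 x) / 1 + (\<Sum>x\<in>R. g2 x) / c"
    using R c g_nonneg by (intro add_mono card_ge_le_sum_div) auto
  also have "\<dots> = (1 / T powr s + T powr (1 - s) / c) * (\<Sum>x\<in>R. \<Sum>n\<in>I x. A n powr s)"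
    by (simp add: g1_def g2_def sum_divide_distrib[symmetric] sum_distrib_left[symmetric]
        sum_distrib_right[symmetric] field_simps)
  finally show ?thesis .
qed

lemma sum_short_interval_sums_le:
  fixes a :: "nat \<Rightarrow> real" and R :: "nat set" and H :: real
  assumes a: "\<And>n. a n \<ge> 0" and R: "finite R" and H: "H \<ge> 0"
    and le_N: "\<And>x n. x \<in> R \<Longrightarrow> real n \<le> real x + H \<Longrightarrow> n \<le> N"
  shows "(\<Sum>x\<in>R. \<Sum>n\<in>{n. x < n \<and> real n \<le> real x + H}. a n) \<le> H * (\<Sum>n=1..N. a n)"
proof -
  let ?I = "\<lambda>x. {n. x < n \<and> real n \<le> real x + H}"
  have I: "finite (?I x)" if "x \<in> R" for x
    by (rule finite_subset[of _ "{..N}"]) (use le_N that in auto)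
  have "(\<Sum>x\<in>R. \<Sum>n\<in>?I x. a n) = (\<Sum>(x, n)\<in>Sigma R ?I. a n)"
    by (rule sum.Sigma) (use R I in auto)
  also have "\<dots> \<le> (\<Sum>(n, i)\<in>{1..N} \<times> {1..nat \<lfloor>H\<rfloor>}. a n)"
  proof (rule sum_le_included[where i = "\<lambda>(n, i). (n - i, n)"])
    show "\<forall>y\<in>Sigma R ?I. \<exists>z\<in>{1..N} \<times> {1..nat \<lfloor>H\<rfloor>}. (case z of (n, i) \<Rightarrow> (n - i, n)) = y
        \<and> (case y of (x, n) \<Rightarrow> a n) \<le> (case z of (n, i) \<Rightarrow> a n)"
    proof
      fix y assume "y \<in> Sigma R ?I"
      then obtain x n where y: "y = (x, n)" "x \<in> R" "x < n" "real n \<le> real x + H" by auto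
      have "real (n - x) \<le> H" using y by (simp add: of_nat_diff)
      hence "n - x \<le> nat \<lfloor>H\<rfloor>" by (rule le_nat_floor)
      moreover have "n \<le> N" using le_N y by auto
      ultimately show "\<exists>z\<in>{1..N} \<times> {1..nat \<lfloor>H\<rfloor>}. (case z of (n, i) \<Rightarrow> (n - i, n)) = y
        \<and> (case y of (x, n) \<Rightarrow> a n) \<le> (case z of (n, i) \<Rightarrow> a n)"
        using y by (intro bexI[of _ "(n, n - x)"]) auto
    qed
  qed (use R a I in \<open>auto intro: finite_SigmaI\<close>)
  also have "\<dots> = (\<Sum>n=1..N. \<Sum>i=1..nat \<lfloor>H\<rfloor>. a n)"
    by (rule sum.cartesian_product[symmetric])
  also have "\<dots> = real (nat \<lfloor>H\<rfloor>) * (\<Sum>n=1..N. a n)"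
    by (simp add: sum_distrib_left mult.commute)
  also have "\<dots> \<le> H * (\<Sum>n=1..N. a n)"
    using H a by (intro mult_right_mono sum_nonneg) linarith+
  finally show ?thesis .
qed

lemma divisor_k_le_mult_by_exponents:
  "n > 0 \<Longrightarrow> real (divisor_k k n) \<le> mult_by_exponents (\<lambda>j. real (weak_compositions k j)) n"
  using divisor_k_le_prod_weak_compositions[of n k]
  by (simp add: mult_by_exponents_def of_nat_prod[symmetric] del: of_nat_prod)

lemma card_large_divisor_sums_le:
  fixes s T X H \<eta> :: real
  assumes s: "0 \<le> s" "s \<le> 1" and T: "T > 0" and X: "X > 1" and H: "1 \<le> H" "H \<le> X" and \<eta>: "\<eta> > 0"
  shows "real (card {x :: nat. X \<le> real x \<and> real x \<le> 2 * X \<and>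
       (\<Sum>n\<in>{n :: nat. x < n \<and> real n \<le> real x + H}. real (divisor_k k n))
         > \<eta> * H * ln (real x) ^ (k - 1)})
     \<le> (1 / T powr s + T powr (1 - s) / (\<eta> * H * ln X ^ (k - 1))) * H *
        (\<Sum>n=1..nat \<lfloor>3 * X\<rfloor>. mult_by_exponents (\<lambda>j. real (weak_compositions k j) powr s) n)"
proof -
  define A where "A = mult_by_exponents (\<lambda>j. real (weak_compositions k j))"
  define R where "R = {x :: nat. X \<le> real x \<and> real x \<le> 2 * X}"
  define I where "I = (\<lambda>x::nat. {n :: nat. x < n \<and> real n \<le> real x + H})"
  define c where "c = \<eta> * H * ln X ^ (k - 1)"
  have A_nonneg: "A n \<ge> 0" for n unfolding A_def by (rule mult_by_exponents_nonneg) simp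
  have A_powr: "A n powr s = mult_by_exponents (\<lambda>j. real (weak_compositions k j) powr s) n" for n
    by (simp add: A_def mult_by_exponents_def prod_powr_distrib)
  have c: "c > 0" using X H \<eta> by (simp add: c_def)
  have R: "finite R"
    by (rule finite_subset[of _ "{..nat \<lfloor>2 * X\<rfloor>}"]) (auto simp: R_def intro: le_nat_floor)
  have le_N: "n \<le> nat \<lfloor>3 * X\<rfloor>" if "x \<in> R" "real n \<le> real x + H" for x n
    using that H by (intro le_nat_floor) (auto simp: R_def)
  have "{x :: nat. X \<le> real x \<and> real x \<le> 2 * X \<and>
       (\<Sum>n\<in>{n :: nat. x < n \<and> real n \<le> real x + H}. real (divisor_k k n)) > \<eta> * H * ln (real x) ^ (k - 1)}
    \<subseteq> {x\<in>R. (\<Sum>n\<in>I x. real (divisor_k k n)) > c}"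
  proof (intro subsetI)
    fix x :: nat
    assume "x \<in> {x :: nat. X \<le> real x \<and> real x \<le> 2 * X \<and>
       (\<Sum>n\<in>{n :: nat. x < n \<and> real n \<le> real x + H}. real (divisor_k k n)) > \<eta> * H * ln (real x) ^ (k - 1)}"
    hence x: "X \<le> real x" "real x \<le> 2 * X"
      and large: "(\<Sum>n\<in>I x. real (divisor_k k n)) > \<eta> * H * ln (real x) ^ (k - 1)"
      by (simp_all add: I_def)
    have "ln X ^ (k - 1) \<le> ln (real x) ^ (k - 1)" using x X by (intro power_mono) auto
    hence "c \<le> \<eta> * H * ln (real x) ^ (k - 1)" using H \<eta> by (simp add: c_def)
    thus "x \<in> {x\<in>R. (\<Sum>n\<in>I x. real (divisor_k k n)) > c}" using x large by (simp add: R_def)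
  qed
  hence "real (card {x :: nat. X \<le> real x \<and> real x \<le> 2 * X \<and>
       (\<Sum>n\<in>{n :: nat. x < n \<and> real n \<le> real x + H}. real (divisor_k k n)) > \<eta> * H * ln (real x) ^ (k - 1)})
      \<le> real (card {x\<in>R. (\<Sum>n\<in>I x. real (divisor_k k n)) > c})"
    using R by (intro of_nat_mono card_mono) auto
  also have "\<dots> \<le> (1 / T powr s + T powr (1 - s) / c) * (\<Sum>x\<in>R. \<Sum>n\<in>I x. A n powr s)"
  proof (rule card_large_sums_le[OF R _ _ A_nonneg s T c])
    show "finite (I x)" if "x \<in> R" for x
      by (rule finite_subset[of _ "{..nat \<lfloor>3 * X\<rfloor>}"]) (use le_N that in \<open>auto simp: I_def\<close>)
    show "real (divisor_k k n) \<le> A n" if "x \<in> R" "n \<in> I x" for x n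
      using that divisor_k_le_mult_by_exponents[of n k] by (auto simp: I_def A_def)
  qed
  also have "\<dots> \<le> (1 / T powr s + T powr (1 - s) / c) * (H * (\<Sum>n=1..nat \<lfloor>3 * X\<rfloor>. A n powr s))"
  proof (rule mult_left_mono)
    show "(\<Sum>x\<in>R. \<Sum>n\<in>I x. A n powr s) \<le> H * (\<Sum>n=1..nat \<lfloor>3 * X\<rfloor>. A n powr s)"
      unfolding I_def by (rule sum_short_interval_sums_le[OF _ R _ le_N]) (use H in simp_all)
    show "0 \<le> 1 / T powr s + T powr (1 - s) / c" using T c by simp
  qed
  finally show ?thesis unfolding A_powr c_def by (simp only: mult.assoc)
qed

section \<open>Choice of the parameters and the theorem\<close>

lemma exp_minus_le_quadratic:
  fixes u :: real
  assumes u: "u \<ge> 0"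
  shows "exp (- u) \<le> 1 - u + u^2 / 2"
proof -
  define q where "q = 1 + u + u^2 / 2"
  have q: "q \<le> exp u" unfolding q_def using exp_lower_Taylor_quadratic[OF u] .
  have q0: "q > 0" using u by (simp add: q_def add_pos_nonneg)
  have "exp (- u) = 1 / exp u" by (simp add: exp_minus field_simps)
  also have "\<dots> \<le> 1 / q" using q q0 by (intro divide_left_mono) auto
  also have "\<dots> \<le> 1 - u + u^2 / 2"
  proof -
    have "q * (1 - u + u^2 / 2) = 1 + u^4 / 4"
      by (simp add: q_def algebra_simps power2_eq_square power4_eq_xxxx)
    hence "1 \<le> q * (1 - u + u^2 / 2)" by simp
    thus ?thesis using q0 by (simp add: field_simps)
  qed
  finally show ?thesis .
qed

text \<open>
  With \<open>s = 1 - \<delta>\<close> we have \<open>k^s = k exp(-\<delta> log k) \<le> k - \<delta> k log k + \<delta>\<^sup>2 k (log k)\<^sup>2 / 2\<close>;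
  the choice \<open>\<delta> = \<epsilon> / (2 k (log k)\<^sup>2 + 2)\<close> makes the quadratic term smaller than the
  gain \<open>\<delta> \<epsilon> / 2\<close> coming from \<open>\<tau> = k log k - \<epsilon> / 2\<close>.
\<close>
lemma Rankin_exponents:
  fixes k :: nat and \<epsilon> :: real
  assumes k: "k \<ge> 2" and e0: "0 < \<epsilon>" and e1: "\<epsilon> \<le> 1"
  obtains s \<tau> where "0 < s" "s < 1"
    "(1 - s) * \<tau> + real k powr s - real k < 0"
    "(real k * ln (real k) - real k + 1 - \<epsilon>) - s * \<tau> + real k powr s - 1 < 0"
proof -
  define l where "l = ln (real k)"
  define \<delta> where "\<delta> = \<epsilon> / (2 * real k * l ^ 2 + 2)"
  define s where "s = 1 - \<delta>"
  define K where "K = real k powr s"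
  define \<tau> where "\<tau> = real k * l - \<epsilon> / 2"
  have l: "l > 0" using k by (simp add: l_def)
  have kr: "real k \<ge> 2" using k by simp
  have den: "2 * real k * l ^ 2 + 2 > 0" using l kr by (simp add: add_pos_nonneg)
  have d0: "\<delta> > 0" unfolding \<delta>_def using e0 den by simp
  have kdl: "real k * \<delta> * l^2 \<le> \<epsilon> / 2"
  proof -
    have "real k * \<delta> * l^2 = \<epsilon> * (real k * l^2) / (2 * real k * l ^ 2 + 2)"
      unfolding \<delta>_def by (simp add: field_simps)
    also have "\<dots> \<le> \<epsilon> * (real k * l^2) / (2 * real k * l ^ 2)"
      using e0 l kr den by (intro divide_left_mono) (auto intro!: mult_pos_pos)
    also have "\<dots> = \<epsilon> / 2" using l kr by (simp add: field_simps)
    finally show ?thesis .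
  qed
  have d1: "\<delta> \<le> 1/2"
  proof -
    have "\<delta> \<le> \<epsilon> / 2" unfolding \<delta>_def using e0 den l kr
      by (intro divide_left_mono) (auto simp: add_pos_nonneg)
    thus ?thesis using e1 by simp
  qed
  define u where "u = \<delta> * l"
  have u0: "u \<ge> 0" using d0 l by (simp add: u_def)
  have "K = exp (s * l)" using kr by (simp add: K_def powr_def l_def)
  also have "\<dots> = real k * exp (- u)"
    using kr by (simp add: s_def u_def l_def algebra_simps exp_diff exp_minus field_simps)
  finally have "K \<le> real k * (1 - u + u^2 / 2)"
    using exp_minus_le_quadratic[OF u0] kr by simp
  moreover have "real k * u^2 \<le> \<delta> * (\<epsilon> / 2)"
  proof -
    have P: "real k * u^2 = \<delta> * (real k * \<delta> * l^2)" by (simp add: u_def power2_eq_square)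
    show ?thesis unfolding P using kdl d0 by (intro mult_left_mono) auto
  qed
  moreover have "(1 - s) * \<tau> = real k * u - \<delta> * \<epsilon> / 2"
    by (simp add: s_def \<tau>_def u_def algebra_simps)
  moreover have "s * \<tau> = real k * l - \<epsilon> / 2 - (real k * u - \<delta> * \<epsilon> / 2)"
    by (simp add: s_def \<tau>_def u_def field_simps)
  moreover have "\<delta> * \<epsilon> > 0" using d0 e0 by simp
  ultimately have "(1 - s) * \<tau> + K - real k < 0"
    and "(real k * l - real k + 1 - \<epsilon>) - s * \<tau> + K - 1 < 0"
    using e0 by (simp_all add: algebra_simps)
  moreover have "0 < s" "s < 1" using d0 d1 by (simp_all add: s_def)
  ultimately show ?thesis using that by (simp add: K_def l_def)
qed

lemma Rankin_factor_le_ln_powr: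
  fixes k :: nat and L H \<alpha> \<tau> s K \<eta> :: real
  assumes "k \<ge> 1" "L > 0" "H \<le> L powr \<alpha>" "\<eta> > 0"
  shows "(H / (L powr \<tau>) powr s + (L powr \<tau>) powr (1 - s) / (\<eta> * L ^ (k - 1))) * L powr (K - 1)
    \<le> L powr (\<alpha> - s * \<tau> + K - 1) + L powr ((1 - s) * \<tau> + K - real k) / \<eta>"
proof -
  have "H / (L powr \<tau>) powr s \<le> L powr \<alpha> / L powr (\<tau> * s)"
    unfolding powr_powr using assms by (intro divide_right_mono) simp_all
  hence "H / (L powr \<tau>) powr s * L powr (K - 1) \<le> L powr \<alpha> / L powr (\<tau> * s) * L powr (K - 1)"
    by (rule mult_right_mono) simp
  also have "\<dots> = L powr (\<alpha> - s * \<tau> + K - 1)"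
    using assms by (simp add: powr_diff[symmetric] powr_add[symmetric] algebra_simps)
  finally have first: "H / (L powr \<tau>) powr s * L powr (K - 1) \<le> L powr (\<alpha> - s * \<tau> + K - 1)" .
  have "L ^ (k - 1) = L powr (real k - 1)"
    using assms by (simp add: powr_realpow[symmetric] of_nat_diff)
  hence "(L powr \<tau>) powr (1 - s) / (\<eta> * L ^ (k - 1)) * L powr (K - 1)
      = (L powr (\<tau> * (1 - s)) / L powr (real k - 1) * L powr (K - 1)) / \<eta>"
    by (simp add: powr_powr field_simps)
  also have "L powr (\<tau> * (1 - s)) / L powr (real k - 1) * L powr (K - 1)
      = L powr ((1 - s) * \<tau> + K - real k)"
    using assms by (simp add: powr_diff[symmetric] powr_add[symmetric] algebra_simps)
  finally show ?thesis using first by (simp add: distrib_right)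
qed

lemma card_large_divisor_sums_le_ln_powr:
  fixes k :: nat and s \<tau> \<alpha> \<eta> X H C :: real
  assumes k: "k \<ge> 1" and s: "0 < s" "s < 1"
    and C: "\<And>N. N \<ge> 2 \<Longrightarrow>
      (\<Sum>n=1..N. mult_by_exponents (\<lambda>j. real (weak_compositions k j) powr s) n)
        \<le> C * real N * ln (real N) powr (real k powr s - 1)"
    and X: "X \<ge> 3" "ln (3 * X) \<le> 2 * ln X"
    and H: "1 \<le> H" "H \<le> X" "H \<le> ln X powr \<alpha>" and \<eta>: "\<eta> > 0"
  shows "real (card {x :: nat. X \<le> real x \<and> real x \<le> 2 * X \<and>
       (\<Sum>n\<in>{n :: nat. x < n \<and> real n \<le> real x + H}. real (divisor_k k n))
         > \<eta> * H * ln (real x) ^ (k - 1)})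
    \<le> 3 * 2 powr (real k powr s - 1) * C * X *
       (ln X powr (\<alpha> - s * \<tau> + real k powr s - 1)
        + ln X powr ((1 - s) * \<tau> + real k powr s - real k) / \<eta>)"
proof -
  define K where "K = real k powr s"
  have K1: "K \<ge> 1" using k s by (simp add: K_def ge_one_powr_ge_zero)
  define L where "L = ln X"
  define T where "T = L powr \<tau>"
  define N where "N = nat \<lfloor>3 * X\<rfloor>"
  define S where "S = (\<Sum>n=1..N. mult_by_exponents (\<lambda>j. real (weak_compositions k j) powr s) n)"
  define F where "F = H / T powr s + T powr (1 - s) / (\<eta> * L ^ (k - 1))"
  have L: "L > 0" using X by (simp add: L_def)
  have T: "T > 0" using L by (simp add: T_def)
  have N: "N \<ge> 2" "real N \<le> 3 * X" using X by (simp_all add: N_def) linarith+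
  have S_nonneg: "S \<ge> 0" unfolding S_def by (intro sum_nonneg mult_by_exponents_nonneg) simp
  have "ln (real N) \<le> ln (3 * X)" using N by (intro ln_mono) auto
  hence lnN: "0 < ln (real N)" "ln (real N) \<le> 2 * L"
    using N(1) X(2) unfolding L_def by (simp, linarith)
  have C0: "C \<ge> 0"
  proof -
    have "0 \<le> C * (real N * ln (real N) powr (real k powr s - 1))"
      using S_nonneg C[OF N(1)] by (simp add: S_def mult.assoc)
    moreover have "real N * ln (real N) powr (real k powr s - 1) > 0" using N lnN by simp
    ultimately show ?thesis by (simp add: zero_le_mult_iff)
  qed
  have "real (card {x :: nat. X \<le> real x \<and> real x \<le> 2 * X \<and>
       (\<Sum>n\<in>{n :: nat. x < n \<and> real n \<le> real x + H}. real (divisor_k k n))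
         > \<eta> * H * ln (real x) ^ (k - 1)})
      \<le> (1 / T powr s + T powr (1 - s) / (\<eta> * H * L ^ (k - 1))) * H * S"
    unfolding S_def N_def L_def using s X H \<eta> T by (intro card_large_divisor_sums_le) auto
  also have "\<dots> = F * S" using H by (simp add: F_def field_simps)
  also have "\<dots> \<le> F * (C * (3 * X) * (2 * L) powr (K - 1))"
  proof (rule mult_left_mono)
    show "S \<le> C * (3 * X) * (2 * L) powr (K - 1)"
      unfolding S_def K_def using C[OF N(1)] C0 N lnN K1[unfolded K_def] X
      by (elim order_trans) (intro mult_mono powr_mono2, auto)
    show "F \<ge> 0" using H T L \<eta> by (simp add: F_def)
  qed
  also have "\<dots> = 3 * 2 powr (K - 1) * C * X * (F * L powr (K - 1))"
    using L by (simp add: powr_mult mult_ac)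
  also have "\<dots> \<le> 3 * 2 powr (K - 1) * C * X *
      (L powr (\<alpha> - s * \<tau> + K - 1) + L powr ((1 - s) * \<tau> + K - real k) / \<eta>)"
    unfolding F_def T_def using C0 X L H \<eta> k
    by (intro mult_left_mono Rankin_factor_le_ln_powr) (auto simp: L_def)
  finally show ?thesis by (simp add: K_def L_def)
qed

lemma tendsto_ln_powr_neg: "e < 0 \<Longrightarrow> ((\<lambda>X::real. ln X powr e) \<longlongrightarrow> 0) at_top"
  by real_asymp

lemma eventually_card_large_divisor_sums_le:
  fixes k :: nat and s \<tau> \<alpha> \<eta> :: real and h :: "real \<Rightarrow> real"
  assumes k: "k \<ge> 1" and s: "0 < s" "s < 1"
    and \<gamma>1: "\<alpha> - s * \<tau> + real k powr s - 1 < 0"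
    and \<gamma>2: "(1 - s) * \<tau> + real k powr s - real k < 0"
    and h: "\<forall>\<^sub>F X in at_top. 1 \<le> h X \<and> h X \<le> ln X powr \<alpha>" and \<eta>: "\<eta> > 0"
  shows "\<forall>\<^sub>F X in at_top. real (card {x :: nat. X \<le> real x \<and> real x \<le> 2 * X \<and>
       (\<Sum>n\<in>{n :: nat. x < n \<and> real n \<le> real x + h X}. real (divisor_k k n))
         > \<eta> * h X * ln (real x) ^ (k - 1)}) \<le> \<eta> * X"
proof -
  obtain C where C: "\<And>N. N \<ge> 2 \<Longrightarrow>
      (\<Sum>n=1..N. mult_by_exponents (\<lambda>j. real (weak_compositions k j) powr s) n)
        \<le> C * real N * ln (real N) powr (real k powr s - 1)"
    using sum_mult_by_exponents_weak_compositions_le[OF k less_imp_le[OF s(2)]] by blast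
  define D where "D = 3 * 2 powr (real k powr s - 1) * C"
  define g where "g = (\<lambda>X. ln X powr (\<alpha> - s * \<tau> + real k powr s - 1)
      + ln X powr ((1 - s) * \<tau> + real k powr s - real k) / \<eta>)"
  have "((\<lambda>X. D * g X) \<longlongrightarrow> D * (0 + 0 / \<eta>)) at_top"
    unfolding g_def using \<gamma>1 \<gamma>2 \<eta> by (intro tendsto_intros tendsto_ln_powr_neg) auto
  hence "\<forall>\<^sub>F X in at_top. D * g X < \<eta>" using \<eta> by (intro order_tendstoD(2)) auto
  moreover have "\<forall>\<^sub>F X in at_top. (3::real) \<le> X" by (rule eventually_ge_at_top)
  moreover have "\<forall>\<^sub>F X in at_top. ln (3 * X) \<le> 2 * ln (X::real)" by real_asymp
  moreover have "\<forall>\<^sub>F X in at_top. ln X powr \<alpha> \<le> (X::real)" by real_asymp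
  ultimately show ?thesis using h
  proof eventually_elim
    case (elim X)
    hence "h X \<le> X" by linarith
    with elim have "real (card {x :: nat. X \<le> real x \<and> real x \<le> 2 * X \<and>
       (\<Sum>n\<in>{n :: nat. x < n \<and> real n \<le> real x + h X}. real (divisor_k k n))
         > \<eta> * h X * ln (real x) ^ (k - 1)}) \<le> X * (D * g X)"
      using card_large_divisor_sums_le_ln_powr[OF k s C, of X "h X" \<alpha> \<eta> \<tau>] \<eta>
      by (simp add: D_def g_def mult_ac)
    also have "\<dots> \<le> X * \<eta>" using elim by (intro mult_left_mono) auto
    finally show ?case by (simp add: mult.commute)
  qed
qed

theorem theorem1p2:
  fixes k :: nat and \<epsilon> :: real and h :: "real \<Rightarrow> real"
  assumes "k \<ge> 2" and "\<epsilon> > 0"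
    and "\<forall>\<^sub>F X in at_top. 1 \<le> h X \<and> h X \<le> ln X powr (real k * ln (real k) - real k + 1 - \<epsilon>)"
  shows "\<forall>\<eta>>0. \<forall>\<^sub>F X in at_top.
    real (card {x :: nat. X \<le> real x \<and> real x \<le> 2 * X \<and>
       (\<Sum>n\<in>{n :: nat. x < n \<and> real n \<le> real x + h X}. real (divisor_k k n))
         > \<eta> * h X * ln (real x) ^ (k - 1)}) \<le> \<eta> * X"
proof (intro allI impI)
  fix \<eta> :: real assume \<eta>: "\<eta> > 0"
  define e where "e = min \<epsilon> 1"
  have e: "0 < e" "e \<le> 1" "e \<le> \<epsilon>" using assms(2) by (auto simp: e_def)
  obtain s \<tau> where s: "0 < s" "s < 1"
    and \<gamma>: "(1 - s) * \<tau> + real k powr s - real k < 0"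
      "(real k * ln (real k) - real k + 1 - e) - s * \<tau> + real k powr s - 1 < 0"
    using Rankin_exponents[OF assms(1) e(1,2)] by blast
  have "\<forall>\<^sub>F X in at_top. (1::real) \<le> ln X" by real_asymp
  with assms(3) have "\<forall>\<^sub>F X in at_top. 1 \<le> h X \<and> h X \<le> ln X powr (real k * ln (real k) - real k + 1 - e)"
  proof eventually_elim
    case (elim X)
    have "ln X powr (real k * ln (real k) - real k + 1 - \<epsilon>)
        \<le> ln X powr (real k * ln (real k) - real k + 1 - e)"
      using elim e by (intro powr_mono) auto
    thus ?case using elim by linarith
  qed
  thus "\<forall>\<^sub>F X in at_top. real (card {x :: nat. X \<le> real x \<and> real x \<le> 2 * X \<and>
       (\<Sum>n\<in>{n :: nat. x < n \<and> real n \<le> real x + h X}. real (divisor_k k n))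
         > \<eta> * h X * ln (real x) ^ (k - 1)}) \<le> \<eta> * X"
    using assms(1) by (intro eventually_card_large_divisor_sums_le[OF _ s \<gamma>(2,1) _ \<eta>]) auto
qed

end
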